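(* Let $\mathcal S$ be a finite nonempty index set. For each $s\in\mathcal S$ let $k^s\in\mathbb N$ and $\theta^s=(\theta^s_j)_{j\in\mathbb N}\in\ell^2(\mathbb N)$ be a real sequence. For $\tau\in\{\pm1\}^{k^s}$ define $\theta^{s,\tau}_j:=\tau_j\theta^s_j$ for $j\in[k^s]$ and $\theta^{s,\tau}_j:=0$ otherwise, and $$g^{s,\tau}:=e_0+\sum_{j\in\mathbb Z:|j|\in[k^s]}\theta^{s,\tau}_{|j|}e_j.$$ Assume $g^{s,\tau}\in\mathcal D$ for all $s\in\mathcal S$ and $\tau\in\{\pm1\}^{k^s}$. Let $\mathbb P_1$ be the probability measure on $[0,1)^n$ with density $(z_1,\dots,z_n)\mapsto\frac1{|\mathcal S|}\sum_{s\in\mathcal S}\frac1{2^{k^s}}\sum_{\tau\in\{\pm1\}^{k^s}}\prod_{j\in[n]}g^{s,\tau}(z_j)$, and let $\mathbb P_0$ be the uniform distribution on $[0,1)^n$. Then $$\chi^2(\mathbb P_1,\mathbb P_0)\le\frac1{|\mathcal S|^2}\sum_{s,t\in\mathcal S}\exp\Big(2n^2\sum_{j\in[k^s\wedge k^t]}(\theta^s_j\theta^t_j)^2\Big)-1.$$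
   Context: $e_j(x):=\exp(-\mathrm i2\pi jx)$ for $x\in[0,1)$, $j\in\mathbb Z$ (so $e_0=\mathbb 1_{[0,1)}$). $\mathcal D$ is the set of real-valued probability densities on $[0,1)$ that are square-integrable. $[k]:=\{1,\dots,k\}$. The $\chi^2$-divergence is $\chi^2(\mathbb P_1,\mathbb P_0):=\mathbb E_{\mathbb P_0}\big[(d\mathbb P_1/d\mathbb P_0)^2\big]-1$. *)

theory Defs
  imports "HOL-Probability.Probability"
begin

definition fe :: "int \<Rightarrow> real \<Rightarrow> complex" where
  "fe j x = exp (- \<i> * complex_of_real (2 * pi * real_of_int j * x))"

definition densD :: "(real \<Rightarrow> complex) set" where
  "densD = {f. (\<forall>x\<in>{0..<1}. f x \<in> \<real> \<and> Re (f x) \<ge> 0)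
              \<and> set_integrable lborel {0..<1::real} (\<lambda>x. Re (f x))
              \<and> (LINT x:{0..<1::real}|lborel. Re (f x)) = 1
              \<and> set_integrable lborel {0..<1::real} (\<lambda>x. (Re (f x))\<^sup>2)}"

definition signs :: "nat \<Rightarrow> (nat \<Rightarrow> real) set" where
  "signs k = PiE {1..k} (\<lambda>_. {-1, 1})"

definition theta_tau :: "(nat \<Rightarrow> real) \<Rightarrow> nat \<Rightarrow> (nat \<Rightarrow> real) \<Rightarrow> nat \<Rightarrow> real" where
  "theta_tau \<theta> k \<tau> j = (if j \<in> {1..k} then \<tau> j * \<theta> j else 0)"

definition gfun :: "(nat \<Rightarrow> real) \<Rightarrow> nat \<Rightarrow> (nat \<Rightarrow> real) \<Rightarrow> real \<Rightarrow> complex" where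
  "gfun \<theta> k \<tau> x = fe 0 x +
     (\<Sum>j\<in>{j::int. nat \<bar>j\<bar> \<in> {1..k}}. complex_of_real (theta_tau \<theta> k \<tau> (nat \<bar>j\<bar>)) * fe j x)"

definition unif_cube :: "nat \<Rightarrow> (nat \<Rightarrow> real) measure" where
  "unif_cube n = PiM {1..n} (\<lambda>_. uniform_measure lborel {0..<1::real})"

definition chi2 :: "'a measure \<Rightarrow> 'a measure \<Rightarrow> ereal" where
  "chi2 P1 P0 = enn2ereal (\<integral>\<^sup>+ x. (RN_deriv P0 P1 x)\<^sup>2 \<partial>P0) - 1"

end

theory Submission
  imports Defs
begin

(* Expanding the square of the mixture density, the second moment of dP1/dP0 under the uniform
   law is the average over s, t and over sign vectors tau, tau' of (integral of g^{s,tau} g^{t,tau'})^n.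
   By orthogonality of the cosines this integral equals 1 + 2 sum_j tau_j tau'_j theta^s_j theta^t_j;
   it is nonnegative because both factors are densities, so (1 + x)^n <= exp (n x) applies, and
   averaging over the signs with cosh x <= exp (x^2/2) yields the exponential bound. *)

section \<open>Rademacher averages\<close>

lemma cosh_le_exp_half_square:
  fixes x :: real
  shows "cosh x \<le> exp (x\<^sup>2 / 2)"
proof -
  have nonneg_case: "cosh y \<le> exp (y\<^sup>2 / 2)" if "y \<ge> 0" for y :: real
  proof -
    \<comment> \<open>Hoeffding's lemma for a Bernoulli(1/2) variable, at h = 2 y\<close>
    have "-(2*y) * (1/2) + ln (1 + (1/2) * (exp (2*y) - 1)) \<le> (2*y)\<^sup>2 / 8"
      by (rule Hoeffdings_lemma_aux) (use that in auto)
    then have "ln ((1 + exp (2*y)) / 2) \<le> y + y\<^sup>2 / 2"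
      by (simp add: power2_eq_square field_simps)
    then have "exp (ln ((1 + exp (2*y)) / 2)) \<le> exp (y + y\<^sup>2 / 2)"
      by simp
    then have "(1 + exp (2*y)) / 2 \<le> exp (y + y\<^sup>2 / 2)"
      by (simp add: add_pos_pos)
    then have "(1 + exp (2*y)) / 2 * exp (-y) \<le> exp (y + y\<^sup>2 / 2) * exp (-y)"
      by (rule mult_right_mono) simp
    then show ?thesis
      by (simp add: cosh_def field_simps flip: exp_add)
  qed
  show ?thesis
    using nonneg_case[of "\<bar>x\<bar>"] by (cases "x \<ge> 0") simp_all
qed

lemma one_plus_power_le_exp:
  fixes x :: real
  assumes "0 \<le> 1 + x"
  shows "(1 + x) ^ n \<le> exp (real n * x)"
proof -
  have "(1 + x) ^ n \<le> exp x ^ n"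
    by (intro power_mono assms) (simp add: exp_ge_add_one_self)
  then show ?thesis by (simp add: exp_of_nat_mult)
qed

lemma finite_signs: "finite (signs K)"
  unfolding signs_def by (simp add: finite_PiE)

lemma card_signs: "card (signs K) = 2 ^ K"
  unfolding signs_def by (simp add: card_PiE numeral_2_eq_2)

lemma signs_square: "\<tau> \<in> signs K \<Longrightarrow> m \<in> {1..K} \<Longrightarrow> (\<tau> m)\<^sup>2 = 1"
  unfolding signs_def by (auto simp: PiE_def Pi_def)

lemma sum_signs_exp_le:
  fixes c :: "nat \<Rightarrow> real"
  shows "(\<Sum>\<tau>\<in>signs K. exp (\<Sum>m\<in>{1..K}. \<tau> m * c m)) \<le> 2 ^ K * exp ((\<Sum>m\<in>{1..K}. (c m)\<^sup>2) / 2)"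
proof -
  have "(\<Sum>\<tau>\<in>signs K. exp (\<Sum>m\<in>{1..K}. \<tau> m * c m)) = (\<Sum>\<tau>\<in>signs K. \<Prod>m\<in>{1..K}. exp (\<tau> m * c m))"
    by (simp add: exp_sum)
  also have "\<dots> = (\<Prod>m\<in>{1..K}. \<Sum>y\<in>{-1,1}. exp (y * c m))"
    unfolding signs_def by (rule prod_sum_PiE[symmetric]) auto
  also have "\<dots> = (\<Prod>m\<in>{1..K}. 2 * cosh (c m))"
    by (intro prod.cong refl) (simp add: cosh_def)
  also have "\<dots> \<le> (\<Prod>m\<in>{1..K}. 2 * exp ((c m)\<^sup>2 / 2))"
    by (intro prod_mono conjI mult_left_mono cosh_le_exp_half_square) (auto intro: order.trans[OF zero_le_one])
  also have "\<dots> = 2 ^ K * exp ((\<Sum>m\<in>{1..K}. (c m)\<^sup>2) / 2)"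
    by (simp add: prod.distrib exp_sum sum_divide_distrib)
  finally show ?thesis .
qed

lemma avg_signs_pairs_power_le:
  fixes a :: "nat \<Rightarrow> real"
  assumes nonneg: "\<And>\<tau> \<tau>'. \<tau> \<in> signs K \<Longrightarrow> \<tau>' \<in> signs L \<Longrightarrow>
                  0 \<le> 1 + 2 * (\<Sum>m\<in>{1..min K L}. \<tau> m * \<tau>' m * a m)"
  shows "1 / 2 ^ K * (1 / 2 ^ L) * (\<Sum>\<tau>\<in>signs K. \<Sum>\<tau>'\<in>signs L.
            (1 + 2 * (\<Sum>m\<in>{1..min K L}. \<tau> m * \<tau>' m * a m)) ^ n)
         \<le> exp (2 * (real n)\<^sup>2 * (\<Sum>m\<in>{1..min K L}. (a m)\<^sup>2))"
proof -
  define E where "E = exp (2 * (real n)\<^sup>2 * (\<Sum>m\<in>{1..min K L}. (a m)\<^sup>2))"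
  have inner: "(\<Sum>\<tau>\<in>signs K. (1 + 2 * (\<Sum>m\<in>{1..min K L}. \<tau> m * \<tau>' m * a m)) ^ n) \<le> 2 ^ K * E"
    if \<tau>': "\<tau>' \<in> signs L" for \<tau>'
  proof -
    \<comment> \<open>for fixed \<tau>', the sum over \<tau> is a Rademacher average with coefficients c\<close>
    define c where "c m = (if m \<le> L then 2 * real n * \<tau>' m * a m else 0)" for m
    have sum_c: "real n * (2 * (\<Sum>m\<in>{1..min K L}. \<tau> m * \<tau>' m * a m)) = (\<Sum>m\<in>{1..K}. \<tau> m * c m)"
      for \<tau> :: "nat \<Rightarrow> real"
      unfolding sum_distrib_left
      by (rule sum.mono_neutral_cong_left) (auto simp: c_def)
    have sum_c_square: "(\<Sum>m\<in>{1..K}. (c m)\<^sup>2) / 2 = 2 * (real n)\<^sup>2 * (\<Sum>m\<in>{1..min K L}. (a m)\<^sup>2)"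
    proof -
      have "(\<Sum>m\<in>{1..K}. (c m)\<^sup>2) = 4 * (real n)\<^sup>2 * (\<Sum>m\<in>{1..min K L}. (a m)\<^sup>2)"
        unfolding sum_distrib_left by (rule sum.mono_neutral_cong_right)
           (auto simp: c_def power_mult_distrib signs_square[OF \<tau>'])
      then show ?thesis by simp
    qed
    have "(\<Sum>\<tau>\<in>signs K. (1 + 2 * (\<Sum>m\<in>{1..min K L}. \<tau> m * \<tau>' m * a m)) ^ n)
        \<le> (\<Sum>\<tau>\<in>signs K. exp (real n * (2 * (\<Sum>m\<in>{1..min K L}. \<tau> m * \<tau>' m * a m))))"
      by (intro sum_mono one_plus_power_le_exp nonneg \<tau>')
    also have "\<dots> \<le> 2 ^ K * exp ((\<Sum>m\<in>{1..K}. (c m)\<^sup>2) / 2)"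
      unfolding sum_c by (rule sum_signs_exp_le)
    finally show ?thesis
      unfolding sum_c_square E_def .
  qed
  have "(\<Sum>\<tau>\<in>signs K. \<Sum>\<tau>'\<in>signs L. (1 + 2 * (\<Sum>m\<in>{1..min K L}. \<tau> m * \<tau>' m * a m)) ^ n)
      = (\<Sum>\<tau>'\<in>signs L. \<Sum>\<tau>\<in>signs K. (1 + 2 * (\<Sum>m\<in>{1..min K L}. \<tau> m * \<tau>' m * a m)) ^ n)"
    by (rule sum.swap)
  also have "\<dots> \<le> (\<Sum>\<tau>'\<in>signs L. 2 ^ K * E)"
    by (intro sum_mono inner)
  also have "\<dots> = 2 ^ L * (2 ^ K * E)"
    by (simp add: card_signs)
  finally show ?thesis
    by (simp add: E_def field_simps)
qed

section \<open>Second moments of product mixtures\<close>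

lemma
  fixes f g :: "'i \<Rightarrow> 'a \<Rightarrow> real"
  assumes "finite A" "finite B"
    and integrable: "\<And>a b. a \<in> A \<Longrightarrow> b \<in> B \<Longrightarrow> integrable M (\<lambda>x. f a x * g b x)"
  shows integrable_sum_mult_sum: "integrable M (\<lambda>x. (\<Sum>a\<in>A. f a x) * (\<Sum>b\<in>B. g b x))"
    and integral_sum_mult_sum:
      "(\<integral>x. (\<Sum>a\<in>A. f a x) * (\<Sum>b\<in>B. g b x) \<partial>M) = (\<Sum>a\<in>A. \<Sum>b\<in>B. \<integral>x. f a x * g b x \<partial>M)"
proof -
  have expand: "(\<lambda>x. (\<Sum>a\<in>A. f a x) * (\<Sum>b\<in>B. g b x)) = (\<lambda>x. \<Sum>a\<in>A. \<Sum>b\<in>B. f a x * g b x)"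
    by (simp add: sum_product)
  show "integrable M (\<lambda>x. (\<Sum>a\<in>A. f a x) * (\<Sum>b\<in>B. g b x))"
    unfolding expand by (intro Bochner_Integration.integrable_sum integrable)
  show "(\<integral>x. (\<Sum>a\<in>A. f a x) * (\<Sum>b\<in>B. g b x) \<partial>M) = (\<Sum>a\<in>A. \<Sum>b\<in>B. \<integral>x. f a x * g b x \<partial>M)"
    unfolding expand
    by (simp add: Bochner_Integration.integral_sum Bochner_Integration.integrable_sum integrable)
qed

lemma
  fixes f :: "'a \<Rightarrow> real"
  assumes "sigma_finite_measure M" "finite I" "integrable M f"
  shows integrable_PiM_prod_coords: "integrable (PiM I (\<lambda>_. M)) (\<lambda>z. \<Prod>j\<in>I. f (z j))"
    and integral_PiM_prod_coords: "(\<integral>z. (\<Prod>j\<in>I. f (z j)) \<partial>PiM I (\<lambda>_. M)) = (integral\<^sup>L M f) ^ card I"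
proof -
  interpret product_sigma_finite "\<lambda>_. M"
    by (simp add: product_sigma_finite_def assms)
  show "integrable (PiM I (\<lambda>_. M)) (\<lambda>z. \<Prod>j\<in>I. f (z j))"
    using product_integrable_prod[of I "\<lambda>_. f"] assms by simp
  show "(\<integral>z. (\<Prod>j\<in>I. f (z j)) \<partial>PiM I (\<lambda>_. M)) = (integral\<^sup>L M f) ^ card I"
    using product_integral_prod[of I "\<lambda>_. f"] assms by simp
qed

lemma
  fixes g :: "'s \<Rightarrow> 't \<Rightarrow> 'a \<Rightarrow> real" and w :: "'s \<Rightarrow> real" and I :: "'i set"
  assumes "sigma_finite_measure M" "finite I" "finite S" "\<And>s. s \<in> S \<Longrightarrow> finite (T s)"
    and integrable: "\<And>s t \<tau> \<tau>'. s \<in> S \<Longrightarrow> t \<in> S \<Longrightarrow> \<tau> \<in> T s \<Longrightarrow> \<tau>' \<in> T t \<Longrightarrow>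
                       integrable M (\<lambda>x. g s \<tau> x * g t \<tau>' x)"
  shows integrable_square_product_mixture:
      "integrable (PiM I (\<lambda>_. M)) (\<lambda>z. (\<Sum>s\<in>S. w s * (\<Sum>\<tau>\<in>T s. \<Prod>j\<in>I. g s \<tau> (z j)))\<^sup>2)"
    and integral_square_product_mixture:
      "(\<integral>z. (\<Sum>s\<in>S. w s * (\<Sum>\<tau>\<in>T s. \<Prod>j\<in>I. g s \<tau> (z j)))\<^sup>2 \<partial>PiM I (\<lambda>_. M))
         = (\<Sum>s\<in>S. \<Sum>t\<in>S. w s * w t *
              (\<Sum>\<tau>\<in>T s. \<Sum>\<tau>'\<in>T t. (\<integral>x. g s \<tau> x * g t \<tau>' x \<partial>M) ^ card I))"
proof -
  let ?M = "PiM I (\<lambda>_. M)"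
  define P where "P s \<tau> z = (\<Prod>j\<in>I. g s \<tau> (z j))" for s \<tau> and z :: "'i \<Rightarrow> 'a"
  have P_mult: "P s \<tau> z * P t \<tau>' z = (\<Prod>j\<in>I. g s \<tau> (z j) * g t \<tau>' (z j))" for s t \<tau> \<tau>' z
    unfolding P_def by (simp add: prod.distrib)
  have P_pairs: "integrable ?M (\<lambda>z. P s \<tau> z * P t \<tau>' z)"
    "(\<integral>z. P s \<tau> z * P t \<tau>' z \<partial>?M) = (\<integral>x. g s \<tau> x * g t \<tau>' x \<partial>M) ^ card I"
    if "s \<in> S" "t \<in> S" "\<tau> \<in> T s" "\<tau>' \<in> T t" for s t \<tau> \<tau>'
    unfolding P_mult using assms(1,2) integrable[OF that]
    by (rule integrable_PiM_prod_coords integral_PiM_prod_coords)+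
  have components: "integrable ?M (\<lambda>z. w s * (\<Sum>\<tau>\<in>T s. P s \<tau> z) * (w t * (\<Sum>\<tau>'\<in>T t. P t \<tau>' z)))"
    "(\<integral>z. w s * (\<Sum>\<tau>\<in>T s. P s \<tau> z) * (w t * (\<Sum>\<tau>'\<in>T t. P t \<tau>' z)) \<partial>?M)
       = w s * w t * (\<Sum>\<tau>\<in>T s. \<Sum>\<tau>'\<in>T t. (\<integral>x. g s \<tau> x * g t \<tau>' x \<partial>M) ^ card I)"
    if "s \<in> S" "t \<in> S" for s t
  proof -
    have regroup: "w s * X * (w t * Y) = w s * w t * (X * Y)" for X Y :: real
      by simp
    show "integrable ?M (\<lambda>z. w s * (\<Sum>\<tau>\<in>T s. P s \<tau> z) * (w t * (\<Sum>\<tau>'\<in>T t. P t \<tau>' z)))"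
      unfolding regroup using that assms(4)
      by (intro integrable_mult_right integrable_sum_mult_sum P_pairs) auto
    show "(\<integral>z. w s * (\<Sum>\<tau>\<in>T s. P s \<tau> z) * (w t * (\<Sum>\<tau>'\<in>T t. P t \<tau>' z)) \<partial>?M)
       = w s * w t * (\<Sum>\<tau>\<in>T s. \<Sum>\<tau>'\<in>T t. (\<integral>x. g s \<tau> x * g t \<tau>' x \<partial>M) ^ card I)"
      unfolding regroup integral_mult_right_zero using that assms(4)
      by (simp add: integral_sum_mult_sum P_pairs)
  qed
  have square: "(\<Sum>s\<in>S. w s * (\<Sum>\<tau>\<in>T s. P s \<tau> z))\<^sup>2
      = (\<Sum>s\<in>S. w s * (\<Sum>\<tau>\<in>T s. P s \<tau> z)) * (\<Sum>t\<in>S. w t * (\<Sum>\<tau>'\<in>T t. P t \<tau>' z))" for z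
    by (rule power2_eq_square)
  show "integrable ?M (\<lambda>z. (\<Sum>s\<in>S. w s * (\<Sum>\<tau>\<in>T s. \<Prod>j\<in>I. g s \<tau> (z j)))\<^sup>2)"
    using components(1) assms(3)
    unfolding P_def[symmetric] square by (intro integrable_sum_mult_sum)
  show "(\<integral>z. (\<Sum>s\<in>S. w s * (\<Sum>\<tau>\<in>T s. \<Prod>j\<in>I. g s \<tau> (z j)))\<^sup>2 \<partial>?M)
         = (\<Sum>s\<in>S. \<Sum>t\<in>S. w s * w t *
              (\<Sum>\<tau>\<in>T s. \<Sum>\<tau>'\<in>T t. (\<integral>x. g s \<tau> x * g t \<tau>' x \<partial>M) ^ card I))"
    using components assms(3)
    unfolding P_def[symmetric] square by (simp add: integral_sum_mult_sum)
qed

lemma chi2_density_le_second_moment: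
  fixes f :: "'a \<Rightarrow> real"
  assumes "sigma_finite_measure M" "f \<in> borel_measurable M" "integrable M (\<lambda>x. (f x)\<^sup>2)"
  shows "chi2 (density M (\<lambda>x. ennreal (f x))) M \<le> ereal (\<integral>x. (f x)\<^sup>2 \<partial>M) - 1"
proof -
  let ?N = "density M (\<lambda>x. ennreal (f x))"
  have "AE x in M. ennreal (f x) = RN_deriv M ?N x"
    using assms(1,2) by (intro sigma_finite_measure.RN_deriv_unique) auto
  then have "(\<integral>\<^sup>+ x. (RN_deriv M ?N x)\<^sup>2 \<partial>M) = (\<integral>\<^sup>+ x. (ennreal (f x))\<^sup>2 \<partial>M)"
    by (intro nn_integral_cong_AE) auto
  \<comment> \<open>an inequality, not an equality: ennreal truncates negative values of f to 0\<close>
  also have "\<dots> \<le> (\<integral>\<^sup>+ x. ennreal ((f x)\<^sup>2) \<partial>M)"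
  proof (rule nn_integral_mono)
    fix x show "(ennreal (f x))\<^sup>2 \<le> ennreal ((f x)\<^sup>2)"
      by (cases "f x \<ge> 0") (auto simp: ennreal_power ennreal_neg)
  qed
  also have "\<dots> = ennreal (\<integral>x. (f x)\<^sup>2 \<partial>M)"
    using assms(3) by (intro nn_integral_eq_integral) auto
  finally have "enn2ereal (\<integral>\<^sup>+ x. (RN_deriv M ?N x)\<^sup>2 \<partial>M) \<le> ereal (\<integral>x. (f x)\<^sup>2 \<partial>M)"
    by (simp add: less_eq_ennreal.rep_eq)
  then show ?thesis
    unfolding chi2_def by (rule ereal_minus_mono) simp
qed

section \<open>Fourier integrals on the unit interval\<close>

abbreviation unif01 :: "real measure" where
  "unif01 \<equiv> uniform_measure lborel {0..<1}"

lemma prob_space_unif01: "prob_space unif01"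
  by (rule prob_space_uniform_measure) auto

lemma unif01_eq_density: "unif01 = density lborel (\<lambda>x. ennreal (indicator {0..<1} x))"
  unfolding uniform_measure_def by (intro density_cong) (auto simp: indicator_def)

lemma
  fixes f :: "real \<Rightarrow> real"
  assumes f: "continuous_on UNIV f"
  shows integrable_unif01_continuous: "integrable unif01 f"
    and integral_unif01_continuous:
      "integral\<^sup>L unif01 f = integral\<^sup>L lborel (\<lambda>x. indicator {0..1} x *\<^sub>R f x)"
proof -
  have [measurable]: "f \<in> borel_measurable borel"
    using f by (rule borel_measurable_continuous_onI)
  have "set_integrable lborel {0..1} f"
    by (rule borel_integrable_atLeastAtMost') (rule continuous_on_subset[OF f], auto)
  then have "set_integrable lborel {0..<1} f"
    by (rule set_integrable_subset) auto
  then show "integrable unif01 f"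
    unfolding unif01_eq_density by (subst integrable_density) (auto simp: set_integrable_def)
  have "integral\<^sup>L unif01 f = integral\<^sup>L lborel (\<lambda>x. indicator {0..<1} x *\<^sub>R f x)"
    unfolding unif01_eq_density by (subst integral_density) auto
  also have "\<dots> = integral\<^sup>L lborel (\<lambda>x. indicator {0..1} x *\<^sub>R f x)"
    by (intro integral_cong_AE) (auto intro!: eventually_mono[OF AE_lborel_singleton[of 1]] simp: indicator_def)
  finally show "integral\<^sup>L unif01 f = integral\<^sup>L lborel (\<lambda>x. indicator {0..1} x *\<^sub>R f x)" .
qed

lemma integral_unif01_cos:
  fixes p :: int
  shows "(\<integral>x. cos (2 * pi * p * x) \<partial>unif01) = (if p = 0 then 1 else 0)"
proof (cases "p = 0")
  case True
  then show ?thesis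
    using prob_space.prob_space[OF prob_space_unif01] by (simp add: measure_def)
next
  case False
  have "(\<integral>x. cos (2 * pi * p * x) \<partial>unif01) = integral\<^sup>L lborel (\<lambda>x. indicator {0..1} x *\<^sub>R cos (2 * pi * p * x))"
    by (rule integral_unif01_continuous) (intro continuous_intros)
  also have "\<dots> = sin (2 * pi * p * 1) / (2 * pi * p) - sin (2 * pi * p * 0) / (2 * pi * p)"
    using False
    by (intro integral_FTC_atLeastAtMost)
       (auto intro!: derivative_eq_intros continuous_intros
             simp: has_real_derivative_iff_has_vector_derivative[symmetric])
  finally show ?thesis
    using False by simp
qed

lemma integral_unif01_cos_mult_cos:
  fixes m l :: nat
  assumes "m \<ge> 1" "l \<ge> 1"
  shows "(\<integral>x. cos (2 * pi * m * x) * cos (2 * pi * l * x) \<partial>unif01) = (if m = l then 1/2 else 0)"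
proof -
  have product_to_sum: "cos (2 * pi * m * x) * cos (2 * pi * l * x)
      = cos (2 * pi * (int m - int l) * x) / 2 + cos (2 * pi * (int m + int l) * x) / 2" for x
  proof -
    have "2 * pi * (int m - int l) * x = 2 * pi * m * x - 2 * pi * l * x"
      and "2 * pi * (int m + int l) * x = 2 * pi * m * x + 2 * pi * l * x"
      by (simp_all add: algebra_simps)
    then show ?thesis
      by (simp add: cos_times_cos)
  qed
  have "(\<integral>x. cos (2 * pi * m * x) * cos (2 * pi * l * x) \<partial>unif01)
      = (\<integral>x. cos (2 * pi * (int m - int l) * x) \<partial>unif01) / 2 + (\<integral>x. cos (2 * pi * (int m + int l) * x) \<partial>unif01) / 2"
    unfolding product_to_sum integral_divide_zero[symmetric]
    by (rule Bochner_Integration.integral_add) (auto intro!: integrable_unif01_continuous continuous_intros)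
  also have "\<dots> = (if int m - int l = 0 then 1 else 0) / 2 + (if int m + int l = 0 then 1 else 0) / 2"
    by (simp only: integral_unif01_cos)
  also have "\<dots> = (if m = l then 1/2 else 0)"
    using assms by simp
  finally show ?thesis .
qed

lemma integral_unif01_cosine_poly_mult:
  fixes a b :: "nat \<Rightarrow> real"
  shows "(\<integral>x. (1 + 2 * (\<Sum>m\<in>{1..K}. a m * cos (2 * pi * m * x)))
              * (1 + 2 * (\<Sum>l\<in>{1..L}. b l * cos (2 * pi * l * x))) \<partial>unif01)
         = 1 + 2 * (\<Sum>m\<in>{1..min K L}. a m * b m)"
proof -
  define A where "A x = (\<Sum>m\<in>{1..K}. a m * cos (2 * pi * m * x))" for x
  define B where "B x = (\<Sum>l\<in>{1..L}. b l * cos (2 * pi * l * x))" for x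
  have integrable: "integrable unif01 (\<lambda>x. 1::real)" "integrable unif01 A" "integrable unif01 B"
    "integrable unif01 (\<lambda>x. A x * B x)"
    unfolding A_def B_def by (intro integrable_unif01_continuous continuous_intros)+
  have mean_zero: "integral\<^sup>L unif01 A = 0" "integral\<^sup>L unif01 B = 0"
    unfolding A_def B_def
    by (simp_all add: Bochner_Integration.integral_sum integrable_unif01_continuous continuous_intros
        integral_unif01_cos[of "int _", simplified])
  have "integral\<^sup>L unif01 (\<lambda>x. A x * B x)
      = (\<Sum>m\<in>{1..K}. \<Sum>l\<in>{1..L}. \<integral>x. a m * cos (2 * pi * m * x) * (b l * cos (2 * pi * l * x)) \<partial>unif01)"
    unfolding A_def B_def
    by (rule integral_sum_mult_sum) (auto intro!: integrable_unif01_continuous continuous_intros)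
  also have "\<dots> = (\<Sum>m\<in>{1..K}. \<Sum>l\<in>{1..L}. a m * b l * (if m = l then 1/2 else 0))"
  proof (intro sum.cong refl)
    fix m l assume "m \<in> {1..K}" "l \<in> {1..L}"
    have "(\<lambda>x. a m * cos (2 * pi * m * x) * (b l * cos (2 * pi * l * x)))
        = (\<lambda>x. a m * b l * (cos (2 * pi * m * x) * cos (2 * pi * l * x)))"
      by (simp add: ac_simps)
    then show "(\<integral>x. a m * cos (2 * pi * m * x) * (b l * cos (2 * pi * l * x)) \<partial>unif01)
        = a m * b l * (if m = l then 1/2 else 0)"
      using \<open>m \<in> {1..K}\<close> \<open>l \<in> {1..L}\<close> by (simp add: integral_unif01_cos_mult_cos)
  qed
  also have "\<dots> = (\<Sum>m\<in>{1..K}. if m \<le> L then a m * b m / 2 else 0)"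
    by (intro sum.cong refl) (auto simp: if_distrib[of "\<lambda>x. _ * x"] sum.delta cong: if_cong)
  also have "\<dots> = (\<Sum>m\<in>{1..min K L}. a m * b m) / 2"
    unfolding sum_divide_distrib by (rule sum.mono_neutral_cong_right) auto
  finally have "integral\<^sup>L unif01 (\<lambda>x. A x * B x) = (\<Sum>m\<in>{1..min K L}. a m * b m) / 2" .
  moreover have "(\<lambda>x. (1 + 2 * A x) * (1 + 2 * B x)) = (\<lambda>x. 1 + (2 * A x + (2 * B x + 4 * (A x * B x))))"
    by (simp add: algebra_simps)
  ultimately have "(\<integral>x. (1 + 2 * A x) * (1 + 2 * B x) \<partial>unif01) = 1 + 2 * (\<Sum>m\<in>{1..min K L}. a m * b m)"
    using integrable mean_zero prob_space.prob_space[OF prob_space_unif01]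
    by (simp add: Bochner_Integration.integral_add measure_def)
  then show ?thesis
    unfolding A_def B_def .
qed

lemma Re_fe: "Re (fe j x) = cos (2 * pi * j * x)"
  unfolding fe_def by (simp add: Re_exp)

lemma Re_gfun_eq_cosine_sum:
  "Re (gfun \<theta> k \<tau> x) = 1 + 2 * (\<Sum>m\<in>{1..k}. theta_tau \<theta> k \<tau> m * cos (2 * pi * m * x))"
proof -
  define \<phi> where "\<phi> j = theta_tau \<theta> k \<tau> (nat \<bar>j\<bar>) * cos (2 * pi * j * x)" for j :: int
  have frequencies: "{j::int. nat \<bar>j\<bar> \<in> {1..k}} = int ` {1..k} \<union> (\<lambda>m. - int m) ` {1..k}"
  proof (intro equalityI subsetI)
    fix j :: int assume "j \<in> {j::int. nat \<bar>j\<bar> \<in> {1..k}}"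
    then show "j \<in> int ` {1..k} \<union> (\<lambda>m. - int m) ` {1..k}"
      by (cases "j \<ge> 0") (auto simp: image_iff intro!: bexI[of _ "nat \<bar>j\<bar>"])
  qed auto
  have "Re (gfun \<theta> k \<tau> x) = 1 + (\<Sum>j\<in>{j::int. nat \<bar>j\<bar> \<in> {1..k}}. \<phi> j)"
    unfolding gfun_def \<phi>_def by (simp add: Re_fe)
  also have "(\<Sum>j\<in>{j::int. nat \<bar>j\<bar> \<in> {1..k}}. \<phi> j)
      = (\<Sum>j\<in>int ` {1..k}. \<phi> j) + (\<Sum>j\<in>(\<lambda>m. - int m) ` {1..k}. \<phi> j)"
    unfolding frequencies by (rule sum.union_disjoint) auto
  also have "(\<Sum>j\<in>int ` {1..k}. \<phi> j) = (\<Sum>m\<in>{1..k}. theta_tau \<theta> k \<tau> m * cos (2 * pi * m * x))"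
    by (subst sum.reindex) (auto simp: inj_on_def \<phi>_def)
  also have "(\<Sum>j\<in>(\<lambda>m. - int m) ` {1..k}. \<phi> j) = (\<Sum>m\<in>{1..k}. theta_tau \<theta> k \<tau> m * cos (2 * pi * m * x))"
    by (subst sum.reindex) (auto simp: inj_on_def \<phi>_def)
  finally show ?thesis by simp
qed

lemma continuous_on_Re_gfun: "continuous_on UNIV (\<lambda>x. Re (gfun \<theta> k \<tau> x))"
  unfolding Re_gfun_eq_cosine_sum by (intro continuous_intros)

lemma borel_measurable_Re_gfun[measurable]: "(\<lambda>x. Re (gfun \<theta> k \<tau> x)) \<in> borel_measurable borel"
  using continuous_on_Re_gfun by (rule borel_measurable_continuous_onI)

lemma integral_unif01_Re_gfun_mult:
  "(\<integral>x. Re (gfun \<theta> K \<tau> x) * Re (gfun \<theta>' L \<tau>' x) \<partial>unif01)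
     = 1 + 2 * (\<Sum>m\<in>{1..min K L}. \<tau> m * \<tau>' m * (\<theta> m * \<theta>' m))"
proof -
  have "(\<integral>x. Re (gfun \<theta> K \<tau> x) * Re (gfun \<theta>' L \<tau>' x) \<partial>unif01)
      = 1 + 2 * (\<Sum>m\<in>{1..min K L}. theta_tau \<theta> K \<tau> m * theta_tau \<theta>' L \<tau>' m)"
    unfolding Re_gfun_eq_cosine_sum by (rule integral_unif01_cosine_poly_mult)
  also have "(\<Sum>m\<in>{1..min K L}. theta_tau \<theta> K \<tau> m * theta_tau \<theta>' L \<tau>' m)
      = (\<Sum>m\<in>{1..min K L}. \<tau> m * \<tau>' m * (\<theta> m * \<theta>' m))"
    by (intro sum.cong refl) (auto simp: theta_tau_def)
  finally show ?thesis .
qed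

lemma integral_unif01_Re_gfun_mult_nonneg:
  assumes "gfun \<theta> K \<tau> \<in> densD" "gfun \<theta>' L \<tau>' \<in> densD"
  shows "0 \<le> (\<integral>x. Re (gfun \<theta> K \<tau> x) * Re (gfun \<theta>' L \<tau>' x) \<partial>unif01)"
proof (rule integral_nonneg_AE, rule AE_uniform_measureI)
  show "AE x in lborel. x \<in> {0..<1} \<longrightarrow> 0 \<le> Re (gfun \<theta> K \<tau> x) * Re (gfun \<theta>' L \<tau>' x)"
    using assms by (auto simp: densD_def)
qed auto

lemma avg_signs_pairs_gfun_moment_le:
  assumes "\<And>\<tau>. \<tau> \<in> signs K \<Longrightarrow> gfun \<theta> K \<tau> \<in> densD"
    and "\<And>\<tau>'. \<tau>' \<in> signs L \<Longrightarrow> gfun \<theta>' L \<tau>' \<in> densD"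
  shows "1 / 2 ^ K * (1 / 2 ^ L) * (\<Sum>\<tau>\<in>signs K. \<Sum>\<tau>'\<in>signs L.
            (\<integral>x. Re (gfun \<theta> K \<tau> x) * Re (gfun \<theta>' L \<tau>' x) \<partial>unif01) ^ n)
         \<le> exp (2 * (real n)\<^sup>2 * (\<Sum>m\<in>{1..min K L}. (\<theta> m * \<theta>' m)\<^sup>2))"
  unfolding integral_unif01_Re_gfun_mult
proof (rule avg_signs_pairs_power_le)
  fix \<tau> \<tau>' assume "\<tau> \<in> signs K" "\<tau>' \<in> signs L"
  then show "0 \<le> 1 + 2 * (\<Sum>m\<in>{1..min K L}. \<tau> m * \<tau>' m * (\<theta> m * \<theta>' m))"
    using integral_unif01_Re_gfun_mult_nonneg[OF assms] by (simp add: integral_unif01_Re_gfun_mult)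
qed

section \<open>The mixture of the g^{s,\<tau>}\<close>

lemma prob_space_unif_cube: "prob_space (unif_cube n)"
  unfolding unif_cube_def by (intro prob_space_PiM prob_space_unif01)

definition mixture_density :: "'s set \<Rightarrow> ('s \<Rightarrow> nat) \<Rightarrow> ('s \<Rightarrow> nat \<Rightarrow> real) \<Rightarrow> nat \<Rightarrow> (nat \<Rightarrow> real) \<Rightarrow> real" where
  "mixture_density S k \<theta> n z = 1 / real (card S) * (\<Sum>s\<in>S. 1 / 2 ^ k s *
     (\<Sum>\<tau>\<in>signs (k s). \<Prod>j\<in>{1..n}. Re (gfun (\<theta> s) (k s) \<tau> (z j))))"

lemma borel_measurable_mixture_density[measurable]:
  "mixture_density S k \<theta> n \<in> borel_measurable (unif_cube n)"
  unfolding mixture_density_def unif_cube_def by measurable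

lemma mixture_density_eq_weighted_sum:
  "mixture_density S k \<theta> n z = (\<Sum>s\<in>S. (1 / real (card S) * (1 / 2 ^ k s)) *
     (\<Sum>\<tau>\<in>signs (k s). \<Prod>j\<in>{1..n}. Re (gfun (\<theta> s) (k s) \<tau> (z j))))"
  by (simp add: mixture_density_def sum_distrib_left mult.assoc)

lemma
  assumes "finite S"
  shows integrable_square_mixture_density:
      "integrable (unif_cube n) (\<lambda>z. (mixture_density S k \<theta> n z)\<^sup>2)"
    and integral_square_mixture_density:
      "(\<integral>z. (mixture_density S k \<theta> n z)\<^sup>2 \<partial>unif_cube n)
         = (\<Sum>s\<in>S. \<Sum>t\<in>S. (1 / real (card S) * (1 / 2 ^ k s)) * (1 / real (card S) * (1 / 2 ^ k t)) *
              (\<Sum>\<tau>\<in>signs (k s). \<Sum>\<tau>'\<in>signs (k t).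
                 (\<integral>x. Re (gfun (\<theta> s) (k s) \<tau> x) * Re (gfun (\<theta> t) (k t) \<tau>' x) \<partial>unif01) ^ n))"
proof -
  let ?w = "\<lambda>s. 1 / real (card S) * (1 / 2 ^ k s)"
  let ?g = "\<lambda>s \<tau> x. Re (gfun (\<theta> s) (k s) \<tau> x)"
  have sigma_finite: "sigma_finite_measure unif01"
    using prob_space_unif01 by (rule prob_space_imp_sigma_finite)
  have pairs: "integrable unif01 (\<lambda>x. ?g s \<tau> x * ?g t \<tau>' x)" for s t \<tau> \<tau>'
    by (intro integrable_unif01_continuous continuous_intros continuous_on_Re_gfun)
  have integrable: "integrable (PiM {1..n} (\<lambda>_. unif01))
        (\<lambda>z. (\<Sum>s\<in>S. ?w s * (\<Sum>\<tau>\<in>signs (k s). \<Prod>j\<in>{1..n}. ?g s \<tau> (z j)))\<^sup>2)"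
    by (rule integrable_square_product_mixture) (simp_all add: sigma_finite pairs finite_signs \<open>finite S\<close>)
  have integral: "(\<integral>z. (\<Sum>s\<in>S. ?w s * (\<Sum>\<tau>\<in>signs (k s). \<Prod>j\<in>{1..n}. ?g s \<tau> (z j)))\<^sup>2 \<partial>PiM {1..n} (\<lambda>_. unif01))
        = (\<Sum>s\<in>S. \<Sum>t\<in>S. ?w s * ?w t *
             (\<Sum>\<tau>\<in>signs (k s). \<Sum>\<tau>'\<in>signs (k t). (\<integral>x. ?g s \<tau> x * ?g t \<tau>' x \<partial>unif01) ^ card {1..n}))"
    by (rule integral_square_product_mixture) (simp_all add: sigma_finite pairs finite_signs \<open>finite S\<close>)
  show "integrable (unif_cube n) (\<lambda>z. (mixture_density S k \<theta> n z)\<^sup>2)"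
    and "(\<integral>z. (mixture_density S k \<theta> n z)\<^sup>2 \<partial>unif_cube n)
         = (\<Sum>s\<in>S. \<Sum>t\<in>S. (1 / real (card S) * (1 / 2 ^ k s)) * (1 / real (card S) * (1 / 2 ^ k t)) *
              (\<Sum>\<tau>\<in>signs (k s). \<Sum>\<tau>'\<in>signs (k t).
                 (\<integral>x. Re (gfun (\<theta> s) (k s) \<tau> x) * Re (gfun (\<theta> t) (k t) \<tau>' x) \<partial>unif01) ^ n))"
    unfolding mixture_density_eq_weighted_sum unif_cube_def using integrable integral by simp_all
qed

lemma integral_square_mixture_density_le:
  assumes "finite S" and dens: "\<And>s \<tau>. s \<in> S \<Longrightarrow> \<tau> \<in> signs (k s) \<Longrightarrow> gfun (\<theta> s) (k s) \<tau> \<in> densD"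
  shows "(\<integral>z. (mixture_density S k \<theta> n z)\<^sup>2 \<partial>unif_cube n)
           \<le> (1 / real (card S))\<^sup>2 * (\<Sum>s\<in>S. \<Sum>t\<in>S.
                exp (2 * (real n)\<^sup>2 * (\<Sum>j\<in>{1..min (k s) (k t)}. (\<theta> s j * \<theta> t j)\<^sup>2)))"
proof -
  have "1 / real (card S) * (1 / 2 ^ k s) * (1 / real (card S) * (1 / 2 ^ k t)) *
        (\<Sum>\<tau>\<in>signs (k s). \<Sum>\<tau>'\<in>signs (k t).
           (\<integral>x. Re (gfun (\<theta> s) (k s) \<tau> x) * Re (gfun (\<theta> t) (k t) \<tau>' x) \<partial>unif01) ^ n)
      \<le> (1 / real (card S))\<^sup>2 *
           exp (2 * (real n)\<^sup>2 * (\<Sum>j\<in>{1..min (k s) (k t)}. (\<theta> s j * \<theta> t j)\<^sup>2))"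
    if "s \<in> S" "t \<in> S" for s t
  proof -
    have "1 / 2 ^ k s * (1 / 2 ^ k t) * (\<Sum>\<tau>\<in>signs (k s). \<Sum>\<tau>'\<in>signs (k t).
           (\<integral>x. Re (gfun (\<theta> s) (k s) \<tau> x) * Re (gfun (\<theta> t) (k t) \<tau>' x) \<partial>unif01) ^ n)
        \<le> exp (2 * (real n)\<^sup>2 * (\<Sum>j\<in>{1..min (k s) (k t)}. (\<theta> s j * \<theta> t j)\<^sup>2))"
      using that dens by (intro avg_signs_pairs_gfun_moment_le)
    then have "(1 / real (card S))\<^sup>2 * (1 / 2 ^ k s * (1 / 2 ^ k t) * (\<Sum>\<tau>\<in>signs (k s). \<Sum>\<tau>'\<in>signs (k t).
           (\<integral>x. Re (gfun (\<theta> s) (k s) \<tau> x) * Re (gfun (\<theta> t) (k t) \<tau>' x) \<partial>unif01) ^ n))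
        \<le> (1 / real (card S))\<^sup>2 * exp (2 * (real n)\<^sup>2 * (\<Sum>j\<in>{1..min (k s) (k t)}. (\<theta> s j * \<theta> t j)\<^sup>2))"
      by (rule mult_left_mono) simp
    then show ?thesis
      by (simp only: power2_eq_square ac_simps)
  qed
  then show ?thesis
    unfolding integral_square_mixture_density[OF \<open>finite S\<close>]
    by (simp add: sum_distrib_left sum_mono)
qed

theorem lemmaC2:
  fixes S :: "'s set" and k :: "'s \<Rightarrow> nat" and \<theta> :: "'s \<Rightarrow> nat \<Rightarrow> real" and n :: nat
  assumes "finite S" and "S \<noteq> {}"
    and "\<And>s. s \<in> S \<Longrightarrow> summable (\<lambda>j. (\<theta> s j)\<^sup>2)"
    and "\<And>s \<tau>. s \<in> S \<Longrightarrow> \<tau> \<in> signs (k s) \<Longrightarrow> gfun (\<theta> s) (k s) \<tau> \<in> densD"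
  shows "chi2
           (density (unif_cube n) (\<lambda>z. ennreal
              ((1 / real (card S)) * (\<Sum>s\<in>S. (1 / 2 ^ k s) *
                 (\<Sum>\<tau>\<in>signs (k s). \<Prod>j\<in>{1..n}. Re (gfun (\<theta> s) (k s) \<tau> (z j)))))))
           (unif_cube n)
         \<le> ereal ((1 / (real (card S))\<^sup>2) *
              (\<Sum>s\<in>S. \<Sum>t\<in>S. exp (2 * (real n)\<^sup>2 *
                  (\<Sum>j\<in>{1..min (k s) (k t)}. (\<theta> s j * \<theta> t j)\<^sup>2))) - 1)"
proof -
  let ?f = "mixture_density S k \<theta> n"
  have "chi2 (density (unif_cube n) (\<lambda>z. ennreal (?f z))) (unif_cube n)
      \<le> ereal (\<integral>z. (?f z)\<^sup>2 \<partial>unif_cube n) - 1"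
    by (intro chi2_density_le_second_moment prob_space_imp_sigma_finite prob_space_unif_cube
        borel_measurable_mixture_density integrable_square_mixture_density \<open>finite S\<close>)
  also have "\<dots> = ereal ((\<integral>z. (?f z)\<^sup>2 \<partial>unif_cube n) - 1)"
    by (simp add: one_ereal_def)
  also have "\<dots> \<le> ereal ((1 / real (card S))\<^sup>2 * (\<Sum>s\<in>S. \<Sum>t\<in>S.
      exp (2 * (real n)\<^sup>2 * (\<Sum>j\<in>{1..min (k s) (k t)}. (\<theta> s j * \<theta> t j)\<^sup>2))) - 1)"
    using integral_square_mixture_density_le[OF \<open>finite S\<close> assms(4)] by simp
  finally show ?thesis
    unfolding mixture_density_def power_one_over .
qed

end
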